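(* Let $1\le r\le d$ and let $\mathcal{M}\subset\mathbb{R}^d$ be an $r$-dimensional linear subspace. Let $\mathcal{D}$ be a nonempty subset of $\mathcal{M}$ (the data set, contained in a ground-truth set $\mathcal{M}^\ast\subset\mathcal{M}$). Let $\hat{\mathbf n}\sim\mathcal{N}(\mathbf 0,\tfrac1d\mathbf I_d)$ be a random vector and let $F$ be the (random) linear classifier $F(\mathbf x)=1$ if $\hat{\mathbf n}^T\mathbf x\ge 0$ and $F(\mathbf x)=2$ otherwise. Define the Euclidean margin $$d_e(F)=\inf_{\mathbf x\in\mathcal{D}}\ \inf\{\|\boldsymbol\delta\|_2:\ \boldsymbol\delta\in\mathbb{R}^d,\ F(\mathbf x)\neq F(\mathbf x+\boldsymbol\delta)\}$$ and the manifold margin $$d_{\mathcal M}(F)=\tfrac12\inf\{\mathcal R_{\mathcal M}(\mathbf x_1,\mathbf x_2):\ \mathbf x_1,\mathbf x_2\in\mathcal D,\ F(\mathbf x_1)\ne F(\mathbf x_2)\},$$ where $\mathcal R_{\mathcal M}$ is the geodesic distance on $\mathcal M$ (the infimum of lengths of continuously differentiable curves $\gamma:[0,1]\to\mathcal M$ joining the two points, with the inner product induced from $\mathbb{R}^d$). With the conventions $\inf\emptyset=+\infty$ and $d_e(F)/d_{\mathcal M}(F)=0$ when $d_{\mathcal M}(F)=+\infty$, and assuming $d_{\mathcal M}(F)>0$ almost surely, we have $$\mathbb{E}\left[\frac{d_e(F)}{d_{\mathcal M}(F)}\right]\le\sqrt{\frac rd}.$$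
   Context: $\mathbf I_d$ is the $d\times d$ identity matrix and $\|\cdot\|_2$ the Euclidean norm. The expectation is over the random normal vector $\hat{\mathbf n}$ of the decision hyperplane $\{\mathbf x:\hat{\mathbf n}^T\mathbf x=0\}$. *)

theory Defs
  imports "HOL-Analysis.Analysis" "HOL-Probability.Probability"
begin

definition gauss_vec :: "(real^'n) measure" where
  "gauss_vec = density lborel
     (\<lambda>v. \<Prod>i\<in>UNIV. ennreal (normal_density 0 (1 / sqrt (real CARD('n))) (v $ i)))"

definition lin_clf :: "real^'n \<Rightarrow> real^'n \<Rightarrow> nat" where
  "lin_clf nv x = (if nv \<bullet> x \<ge> 0 then 1 else 2)"

definition geodesic_dist :: "(real^'n) set \<Rightarrow> real^'n \<Rightarrow> real^'n \<Rightarrow> ereal" where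
  "geodesic_dist M x y = Inf ((\<lambda>\<gamma>. ereal (integral {0..1} (\<lambda>t. norm (vector_derivative \<gamma> (at t)))))
      ` {\<gamma>. \<gamma> C1_differentiable_on {0..1} \<and> \<gamma> ` {0..1} \<subseteq> M \<and> \<gamma> 0 = x \<and> \<gamma> 1 = y})"

definition eucl_margin :: "(real^'n \<Rightarrow> nat) \<Rightarrow> (real^'n) set \<Rightarrow> ereal" where
  "eucl_margin F D = (INF x\<in>D. INF \<delta>\<in>{\<delta>. F x \<noteq> F (x + \<delta>)}. ereal (norm \<delta>))"

definition manifold_margin :: "(real^'n) set \<Rightarrow> (real^'n \<Rightarrow> nat) \<Rightarrow> (real^'n) set \<Rightarrow> ereal" where
  "manifold_margin M F D = ereal (1/2) *
      Inf {geodesic_dist M x1 x2 | x1 x2. x1 \<in> D \<and> x2 \<in> D \<and> F x1 \<noteq> F x2}"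

definition margin_ratio :: "(real^'n) set \<Rightarrow> (real^'n \<Rightarrow> nat) \<Rightarrow> (real^'n) set \<Rightarrow> real" where
  "margin_ratio M F D = (if manifold_margin M F D = \<infinity> then 0
      else real_of_ereal (eucl_margin F D) / real_of_ereal (manifold_margin M F D))"

end

theory Submission
  imports Defs "HOL-Combinatorics.Transposition"
begin

text \<open>
  Fix a normal vector \<open>v\<close> and let \<open>w\<close> be its orthogonal projection onto \<open>M\<close>, so that
  \<open>v \<bullet> x = w \<bullet> x\<close> on \<open>M\<close>. Put \<open>m = inf\<^sub>x\<^sub>\<in>\<^sub>D \<bar>v \<bullet> x\<bar>\<close>. Points of \<open>D\<close> on opposite sides of the
  hyperplane satisfy \<open>2 m \<le> \<bar>w \<bullet> (x\<^sub>1 - x\<^sub>2)\<bar> \<le> \<parallel>w\<parallel> \<parallel>x\<^sub>1 - x\<^sub>2\<parallel>\<close>, and no curve is shorter than its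
  chord, so \<open>d\<^sub>M \<ge> m / \<parallel>w\<parallel>\<close>; on the other hand \<open>d\<^sub>e \<le> m / \<parallel>v\<parallel>\<close>. Hence the ratio is at most
  \<open>\<parallel>w\<parallel> / \<parallel>v\<parallel> = (\<Sum>\<^sub>b (b \<bullet> v)\<^sup>2 / \<parallel>v\<parallel>\<^sup>2)\<^sup>1\<^sup>/\<^sup>2\<close>, the sum running over an orthonormal basis of \<open>M\<close>.

  The Gaussian is invariant under permutations and sign changes of the coordinates, which forces
  \<open>E[v\<^sub>i v\<^sub>j / \<parallel>v\<parallel>\<^sup>2] = 0\<close> for \<open>i \<noteq> j\<close> and makes the diagonal terms equal, hence at most \<open>1/d\<close>.
  So \<open>E[(b \<bullet> v)\<^sup>2 / \<parallel>v\<parallel>\<^sup>2] \<le> 1/d\<close> for every unit vector \<open>b\<close>, the squared ratio has mean at most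
  \<open>r/d\<close>, and concavity of the square root finishes the proof.
\<close>

definition signed_perm :: "('n \<Rightarrow> 'n) \<Rightarrow> ('n \<Rightarrow> real) \<Rightarrow> real^'n \<Rightarrow> real^'n" where
  "signed_perm p s v = (\<chi> k. s k * v $ p k)"

lemma linear_signed_perm: "linear (signed_perm p s)"
  by (rule linearI) (auto simp: signed_perm_def vec_eq_iff algebra_simps)

lemma signed_perm_measurable [measurable]: "signed_perm p s \<in> borel_measurable borel"
  by (intro borel_measurable_continuous_onI linear_continuous_on
      linear_conv_bounded_linear[THEN iffD1] linear_signed_perm)

lemma prod_Basis_vec:
  fixes g :: "real^'n \<Rightarrow> 'b::comm_monoid_mult"
  shows "(\<Prod>b\<in>Basis. g b) = (\<Prod>i\<in>UNIV. g (axis i 1))"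
proof -
  have Basis_range: "(Basis :: (real^'n) set) = range (\<lambda>i. axis i 1)"
    by (auto simp: Basis_vec_def)
  show ?thesis
    unfolding Basis_range by (subst prod.reindex) (auto simp: inj_on_def axis_eq_axis)
qed

lemma distr_lborel_signed_perm:
  fixes p :: "'n::finite \<Rightarrow> 'n"
  assumes p: "bij p" and s: "\<And>k. \<bar>s k\<bar> = 1"
  shows "distr lborel borel (signed_perm p s) = (lborel :: (real^'n) measure)"
proof (rule lborel_eqI[symmetric])
  fix l u :: "real^'n"
  assume le: "\<And>b. b \<in> Basis \<Longrightarrow> l \<bullet> b \<le> u \<bullet> b"
  have s_cases: "s k = 1 \<or> s k = -1" for k
    using s[of k] by (auto simp: abs_if split: if_splits)
  define q where "q = inv p"
  have pq: "p (q m) = m" and qp: "q (p k) = k" for m k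
    using p by (simp_all add: q_def surj_f_inv_f bij_is_surj inv_f_f bij_is_inj)
  \<comment> \<open>The preimage of a box is the box with permuted and reflected sides.\<close>
  define l' where "l' = (\<chi> m. if s (q m) = 1 then l $ q m else - u $ q m)"
  define u' where "u' = (\<chi> m. if s (q m) = 1 then u $ q m else - l $ q m)"
  have preimage: "signed_perm p s -` box l u = box l' u'"
  proof (intro set_eqI iffI)
    fix v assume "v \<in> signed_perm p s -` box l u"
    then have h: "l $ k < s k * v $ p k \<and> s k * v $ p k < u $ k" for k
      by (auto simp: mem_box_cart signed_perm_def)
    show "v \<in> box l' u'"
      unfolding mem_box_cart
    proof
      fix m
      show "l' $ m < v $ m \<and> v $ m < u' $ m"
        using h[of "q m"] s_cases[of "q m"] by (auto simp: l'_def u'_def pq)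
    qed
  next
    fix v assume "v \<in> box l' u'"
    then have h: "l' $ m < v $ m \<and> v $ m < u' $ m" for m
      by (auto simp: mem_box_cart)
    show "v \<in> signed_perm p s -` box l u"
      unfolding mem_box_cart vimage_eq
    proof
      fix k
      show "l $ k < signed_perm p s v $ k \<and> signed_perm p s v $ k < u $ k"
        using h[of "p k"] s_cases[of k] by (auto simp: l'_def u'_def qp signed_perm_def)
    qed
  qed
  have "l $ i \<le> u $ i" for i
    using le[of "axis i 1"] by (auto simp: Basis_vec_def inner_axis)
  then have le': "\<And>b. b \<in> Basis \<Longrightarrow> l' \<bullet> b \<le> u' \<bullet> b"
    by (auto simp: Basis_vec_def inner_axis l'_def u'_def)
  have "(\<Prod>b\<in>Basis. (u' - l') \<bullet> b) = (\<Prod>m\<in>UNIV. (u - l) $ q m)"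
    by (subst prod_Basis_vec) (auto simp: inner_axis l'_def u'_def intro!: prod.cong)
  also have "\<dots> = (\<Prod>k\<in>UNIV. (u - l) $ k)"
    using bij_imp_bij_inv[OF p] by (intro prod.reindex_bij_betw) (simp add: q_def)
  also have "\<dots> = (\<Prod>b\<in>Basis. (u - l) \<bullet> b)"
    by (subst prod_Basis_vec) (simp add: inner_axis)
  finally show "emeasure (distr lborel borel (signed_perm p s)) (box l u) = (\<Prod>b\<in>Basis. (u - l) \<bullet> b)"
    by (simp add: emeasure_distr preimage le')
qed simp

definition gauss_vec_density :: "real^'n \<Rightarrow> ennreal" where
  "gauss_vec_density v = (\<Prod>i\<in>UNIV. ennreal (normal_density 0 (1 / sqrt (real CARD('n))) (v $ i)))"

lemma gauss_vec_density_measurable [measurable]: "gauss_vec_density \<in> borel_measurable borel"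
  unfolding gauss_vec_density_def by measurable

lemma gauss_vec_eq_density: "gauss_vec = density lborel gauss_vec_density"
  unfolding gauss_vec_def gauss_vec_density_def ..

lemma gauss_vec_density_signed_perm:
  fixes p :: "'n::finite \<Rightarrow> 'n"
  assumes p: "bij p" and s: "\<And>k. \<bar>s k\<bar> = 1"
  shows "gauss_vec_density (signed_perm p s v) = gauss_vec_density v"
proof -
  let ?nd = "normal_density 0 (1 / sqrt (real CARD('n)))"
  have "?nd (s k * x) = ?nd x" for k x
    using s[of k] by (cases "s k = 1") (auto simp: normal_density_def abs_if split: if_splits)
  then have "gauss_vec_density (signed_perm p s v) = (\<Prod>k\<in>UNIV. ennreal (?nd (v $ p k)))"
    by (simp add: gauss_vec_density_def signed_perm_def)
  also have "\<dots> = gauss_vec_density v"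
    unfolding gauss_vec_density_def
    using prod.reindex_bij_betw[of p UNIV UNIV "\<lambda>m. ennreal (?nd (v $ m))"] p by simp
  finally show ?thesis .
qed

lemma distr_gauss_vec_signed_perm:
  assumes p: "bij p" and s: "\<And>k. \<bar>s k\<bar> = 1"
  shows "distr gauss_vec borel (signed_perm p s) = (gauss_vec :: (real^'n) measure)"
proof -
  have "(gauss_vec :: (real^'n) measure) = density (distr lborel borel (signed_perm p s)) gauss_vec_density"
    by (simp add: distr_lborel_signed_perm[OF p s] gauss_vec_eq_density)
  also have "\<dots> = distr (density lborel (\<lambda>v. gauss_vec_density (signed_perm p s v))) borel (signed_perm p s)"
    by (rule density_distr) measurable
  also have "\<dots> = distr gauss_vec borel (signed_perm p s)"
    by (simp add: gauss_vec_density_signed_perm[OF p s] gauss_vec_eq_density)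
  finally show ?thesis ..
qed

lemma integral_gauss_vec_signed_perm:
  fixes g :: "real^'n \<Rightarrow> real"
  assumes p: "bij p" and s: "\<And>k. \<bar>s k\<bar> = 1" and [measurable]: "g \<in> borel_measurable borel"
  shows "(\<integral>v. g (signed_perm p s v) \<partial>gauss_vec) = (\<integral>v. g v \<partial>gauss_vec)"
  by (subst (2) distr_gauss_vec_signed_perm[OF p s, symmetric], subst integral_distr)
     (auto simp: gauss_vec_def)

lemma prob_space_gauss_vec: "prob_space (gauss_vec :: (real^'n) measure)"
proof
  let ?\<sigma> = "1 / sqrt (real CARD('n))"
  have "emeasure (gauss_vec :: (real^'n) measure) (space gauss_vec)
      = (\<integral>\<^sup>+v. (\<Prod>b\<in>(Basis::(real^'n) set). ennreal (normal_density 0 ?\<sigma> (v \<bullet> b))) \<partial>lborel)"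
    by (simp add: gauss_vec_def emeasure_density prod_Basis_vec inner_axis)
  also have "\<dots> = (\<Prod>b\<in>(Basis::(real^'n) set). (\<integral>\<^sup>+x. ennreal (normal_density 0 ?\<sigma> x) \<partial>lborel))"
    by (rule nn_integral_lborel_prod) auto
  also have "\<dots> = 1"
    by (simp add: nn_integral_eq_integral)
  finally show "emeasure (gauss_vec :: (real^'n) measure) (space gauss_vec) = 1" .
qed

lemma inner_signed_perm_self:
  fixes p :: "'n::finite \<Rightarrow> 'n"
  assumes p: "bij p" and s: "\<And>k. \<bar>s k\<bar> = 1"
  shows "signed_perm p s v \<bullet> signed_perm p s v = v \<bullet> v"
proof -
  have s_sq: "s k * s k = 1" for k
    using s[of k] by (metis abs_mult_self_eq mult_1)
  have "signed_perm p s v \<bullet> signed_perm p s v = (\<Sum>k\<in>UNIV. (s k * s k) * (v $ p k * v $ p k))"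
    by (simp add: inner_vec_def signed_perm_def algebra_simps)
  also have "\<dots> = (\<Sum>k\<in>UNIV. v $ p k * v $ p k)"
    by (simp add: s_sq)
  also have "\<dots> = v \<bullet> v"
    unfolding inner_vec_def using sum.reindex_bij_betw[of p UNIV UNIV "\<lambda>m. v $ m * v $ m"] p by simp
  finally show ?thesis .
qed

lemma abs_coord_mult_div_inner_le: "\<bar>v $ i * v $ j / (v \<bullet> v)\<bar> \<le> 1"
proof -
  have "\<bar>v $ i * v $ j\<bar> \<le> norm v * norm v"
    by (simp add: abs_mult mult_mono' component_le_norm_cart)
  also have "\<dots> = v \<bullet> v"
    by (simp add: power2_norm_eq_inner[symmetric] power2_eq_square)
  finally show ?thesis
    by (cases "v \<bullet> v = 0") (simp_all add: abs_divide)
qed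

lemma integrable_coord_mult_div_inner:
  "integrable (gauss_vec :: (real^'n) measure) (\<lambda>v. v $ i * v $ j / (v \<bullet> v))"
proof -
  interpret prob_space "gauss_vec :: (real^'n) measure"
    by (rule prob_space_gauss_vec)
  show ?thesis
  proof (rule integrable_const_bound[where B=1])
    show "AE v in gauss_vec. norm (v $ i * v $ j / (v \<bullet> v)) \<le> 1"
      by (intro AE_I2) (simp only: real_norm_def abs_coord_mult_div_inner_le)
  qed (simp add: gauss_vec_def)
qed

lemma integral_coord_mult_div_inner_eq_0:
  fixes i j :: "'n::finite"
  assumes "i \<noteq> j"
  shows "(\<integral>v. v $ i * v $ j / (v \<bullet> v) \<partial>(gauss_vec :: (real^'n) measure)) = 0"
proof -
  define s where "s k = (if k = i then -1 else 1 :: real)" for k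
  have s: "\<bar>s k\<bar> = 1" for k
    by (simp add: s_def)
  have "(\<integral>v. v $ i * v $ j / (v \<bullet> v) \<partial>(gauss_vec :: (real^'n) measure))
      = (\<integral>v. (\<lambda>w. w $ i * w $ j / (w \<bullet> w)) (signed_perm id s v) \<partial>gauss_vec)"
    by (rule integral_gauss_vec_signed_perm[symmetric]) (auto simp: s)
  also have "\<dots> = (\<integral>v. - (v $ i * v $ j / (v \<bullet> v)) \<partial>gauss_vec)"
    using assms by (simp add: inner_signed_perm_self[OF bij_id s]) (simp add: signed_perm_def s_def)
  finally show ?thesis
    by simp
qed

lemma integral_coord_sq_div_inner_eq:
  fixes i j :: "'n::finite"
  shows "(\<integral>v. v $ i * v $ i / (v \<bullet> v) \<partial>(gauss_vec :: (real^'n) measure))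
       = (\<integral>v. v $ j * v $ j / (v \<bullet> v) \<partial>gauss_vec)"
proof -
  have s: "\<bar>(\<lambda>_. 1::real) k\<bar> = 1" for k :: 'n
    by simp
  have "(\<integral>v. v $ j * v $ j / (v \<bullet> v) \<partial>(gauss_vec :: (real^'n) measure))
      = (\<integral>v. (\<lambda>w. w $ j * w $ j / (w \<bullet> w)) (signed_perm (Transposition.transpose i j) (\<lambda>_. 1) v) \<partial>gauss_vec)"
    by (rule integral_gauss_vec_signed_perm[symmetric]) auto
  also have "\<dots> = (\<integral>v. v $ i * v $ i / (v \<bullet> v) \<partial>gauss_vec)"
    by (simp add: inner_signed_perm_self[OF bij_transpose s]) (simp add: signed_perm_def)
  finally show ?thesis
    by simp
qed

lemma integral_coord_sq_div_inner_le:
  "(\<integral>v. v $ i * v $ i / (v \<bullet> v) \<partial>(gauss_vec :: (real^'n) measure)) \<le> 1 / real CARD('n)"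
proof -
  interpret prob_space "gauss_vec :: (real^'n) measure"
    by (rule prob_space_gauss_vec)
  have sum_le_1: "(\<Sum>k\<in>UNIV. v $ k * v $ k / (v \<bullet> v)) \<le> 1" for v :: "real^'n"
    by (cases "v \<bullet> v = 0") (simp_all add: inner_vec_def flip: sum_divide_distrib)
  have "real CARD('n) * (\<integral>v. v $ i * v $ i / (v \<bullet> v) \<partial>(gauss_vec :: (real^'n) measure))
      = (\<Sum>k::'n\<in>UNIV. \<integral>v. v $ k * v $ k / (v \<bullet> v) \<partial>gauss_vec)"
  proof -
    have "(\<Sum>k::'n\<in>UNIV. \<integral>v. v $ k * v $ k / (v \<bullet> v) \<partial>gauss_vec)
        = (\<Sum>k\<in>(UNIV::'n set). \<integral>v. v $ i * v $ i / (v \<bullet> v) \<partial>(gauss_vec :: (real^'n) measure))"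
      by (rule sum.cong[OF refl]) (rule integral_coord_sq_div_inner_eq)
    then show ?thesis
      by simp
  qed
  also have "\<dots> = (\<integral>v. (\<Sum>k::'n\<in>UNIV. v $ k * v $ k / (v \<bullet> v)) \<partial>gauss_vec)"
    by (simp add: integrable_coord_mult_div_inner)
  also have "\<dots> \<le> (\<integral>v. 1 \<partial>(gauss_vec :: (real^'n) measure))"
    by (intro integral_mono sum_le_1 Bochner_Integration.integrable_sum integrable_coord_mult_div_inner)
       simp
  also have "\<dots> = 1"
    by (simp add: prob_space)
  finally show ?thesis
    by (simp add: field_simps mult.commute)
qed

lemma inner_sq_div_inner_eq_sum:
  fixes b v :: "real^'n"
  shows "(b \<bullet> v)\<^sup>2 / (v \<bullet> v) = (\<Sum>i\<in>UNIV. \<Sum>j\<in>UNIV. b $ i * b $ j * (v $ i * v $ j / (v \<bullet> v)))"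
proof -
  have "(b \<bullet> v)\<^sup>2 = (\<Sum>i\<in>UNIV. \<Sum>j\<in>UNIV. (b $ i * v $ i) * (b $ j * v $ j))"
    by (simp add: inner_vec_def power2_eq_square sum_product)
  then show ?thesis
    by (simp add: sum_divide_distrib algebra_simps)
qed

lemma integrable_inner_sq_div_inner:
  "integrable (gauss_vec :: (real^'n) measure) (\<lambda>v. (b \<bullet> v)\<^sup>2 / (v \<bullet> v))"
  unfolding inner_sq_div_inner_eq_sum
  by (intro Bochner_Integration.integrable_sum integrable_mult_right integrable_coord_mult_div_inner)

lemma integral_inner_sq_div_inner_le:
  fixes b :: "real^'n"
  assumes "norm b = 1"
  shows "(\<integral>v. (b \<bullet> v)\<^sup>2 / (v \<bullet> v) \<partial>gauss_vec) \<le> 1 / real CARD('n)"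
proof -
  have "(\<integral>v. (b \<bullet> v)\<^sup>2 / (v \<bullet> v) \<partial>gauss_vec)
      = (\<Sum>i\<in>UNIV. \<Sum>j\<in>UNIV. b $ i * b $ j * (\<integral>v. v $ i * v $ j / (v \<bullet> v) \<partial>(gauss_vec :: (real^'n) measure)))"
    unfolding inner_sq_div_inner_eq_sum
    by (simp add: integrable_coord_mult_div_inner Bochner_Integration.integrable_sum
        del: times_divide_eq_right)
  also have "\<dots> = (\<Sum>i\<in>UNIV. b $ i * b $ i * (\<integral>v. v $ i * v $ i / (v \<bullet> v) \<partial>(gauss_vec :: (real^'n) measure)))"
  proof (rule sum.cong[OF refl])
    fix i
    show "(\<Sum>j\<in>UNIV. b $ i * b $ j * (\<integral>v. v $ i * v $ j / (v \<bullet> v) \<partial>(gauss_vec :: (real^'n) measure)))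
        = b $ i * b $ i * (\<integral>v. v $ i * v $ i / (v \<bullet> v) \<partial>(gauss_vec :: (real^'n) measure))"
      by (subst sum.remove[of _ i]) (auto simp: integral_coord_mult_div_inner_eq_0 intro!: sum.neutral)
  qed
  also have "\<dots> \<le> (\<Sum>i\<in>UNIV. b $ i * b $ i * (1 / real CARD('n)))"
    by (intro sum_mono mult_left_mono integral_coord_sq_div_inner_le) auto
  also have "\<dots> = (b \<bullet> b) / real CARD('n)"
    by (simp add: inner_vec_def sum_divide_distrib)
  also have "\<dots> = 1 / real CARD('n)"
    using assms by (simp add: power2_norm_eq_inner[symmetric])
  finally show ?thesis .
qed

lemma (in prob_space) nn_integral_sqrt_le:
  fixes Q :: "'a \<Rightarrow> real"
  assumes Q: "integrable M Q" "\<And>x. 0 \<le> Q x" and EQ: "expectation Q \<le> c\<^sup>2" and c: "0 < c"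
  shows "(\<integral>\<^sup>+x. ennreal (sqrt (Q x)) \<partial>M) \<le> ennreal c"
proof -
  have am_gm: "sqrt (Q x) \<le> c / 2 + Q x / (2 * c)" for x
  proof -
    have "0 \<le> (sqrt (Q x) - c)\<^sup>2"
      by simp
    then show ?thesis
      using Q(2)[of x] c by (simp add: power2_diff power2_eq_square field_simps)
  qed
  have "(\<integral>\<^sup>+x. ennreal (sqrt (Q x)) \<partial>M) \<le> (\<integral>\<^sup>+x. ennreal (c / 2 + Q x / (2 * c)) \<partial>M)"
    by (intro nn_integral_mono ennreal_leI am_gm)
  also have "\<dots> = ennreal (\<integral>x. c / 2 + Q x / (2 * c) \<partial>M)"
    using Q c by (intro nn_integral_eq_integral) auto
  also have "\<dots> = ennreal (c / 2 + expectation Q / (2 * c))"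
    using Q(1) by (simp add: prob_space)
  also have "\<dots> \<le> ennreal c"
    using EQ c by (intro ennreal_leI) (simp add: field_simps power2_eq_square)
  finally show ?thesis .
qed

lemma nn_integral_gauss_vec_sqrt_sum_inner_sq_le:
  fixes B :: "(real^'n) set"
  assumes "finite B" "B \<noteq> {}" and unit: "\<And>b. b \<in> B \<Longrightarrow> norm b = 1"
  shows "(\<integral>\<^sup>+v. ennreal (sqrt (\<Sum>b\<in>B. (b \<bullet> v)\<^sup>2 / (v \<bullet> v))) \<partial>gauss_vec)
      \<le> ennreal (sqrt (real (card B) / real CARD('n)))"
proof -
  interpret prob_space "gauss_vec :: (real^'n) measure"
    by (rule prob_space_gauss_vec)
  show ?thesis
  proof (rule nn_integral_sqrt_le)
    show "integrable gauss_vec (\<lambda>v. \<Sum>b\<in>B. (b \<bullet> v)\<^sup>2 / (v \<bullet> v))"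
      by (intro Bochner_Integration.integrable_sum integrable_inner_sq_div_inner)
    have "expectation (\<lambda>v. \<Sum>b\<in>B. (b \<bullet> v)\<^sup>2 / (v \<bullet> v))
        = (\<Sum>b\<in>B. expectation (\<lambda>v. (b \<bullet> v)\<^sup>2 / (v \<bullet> v)))"
      by (simp add: integrable_inner_sq_div_inner)
    also have "\<dots> \<le> (\<Sum>b\<in>B. 1 / real CARD('n))"
      by (intro sum_mono integral_inner_sq_div_inner_le unit)
    finally show "expectation (\<lambda>v. \<Sum>b\<in>B. (b \<bullet> v)\<^sup>2 / (v \<bullet> v)) \<le> (sqrt (real (card B) / real CARD('n)))\<^sup>2"
      by simp
    show "0 < sqrt (real (card B) / real CARD('n))"
      using assms(1,2) by (simp add: card_gt_0_iff)
  qed (simp add: sum_nonneg)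
qed

lemma norm_diff_le_integral_norm_vector_derivative:
  fixes \<gamma> :: "real \<Rightarrow> 'a::euclidean_space"
  assumes "\<gamma> C1_differentiable_on {0..1}"
  shows "norm (\<gamma> 1 - \<gamma> 0) \<le> integral {0..1} (\<lambda>t. norm (vector_derivative \<gamma> (at t)))"
proof -
  obtain \<gamma>' where \<gamma>': "\<And>t. t \<in> {0..1} \<Longrightarrow> (\<gamma> has_vector_derivative \<gamma>' t) (at t)"
    and cont: "continuous_on {0..1} \<gamma>'"
    using assms unfolding C1_differentiable_on_def by blast
  have vd: "vector_derivative \<gamma> (at t) = \<gamma>' t" if "t \<in> {0..1}" for t
    using \<gamma>'[OF that] by (rule vector_derivative_at)
  have "(\<gamma>' has_integral (\<gamma> 1 - \<gamma> 0)) {0..1}"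
    by (rule fundamental_theorem_of_calculus) (use \<gamma>' in \<open>auto intro: has_vector_derivative_at_within\<close>)
  then have ftc: "integral {0..1} \<gamma>' = \<gamma> 1 - \<gamma> 0" and int: "\<gamma>' integrable_on {0..1}"
    by (auto simp: integral_unique has_integral_integrable)
  have "(\<lambda>t. norm (\<gamma>' t)) integrable_on {0..1}"
    by (intro integrable_continuous_interval continuous_on_norm cont)
  then have int_norm: "(\<lambda>t. norm (vector_derivative \<gamma> (at t))) integrable_on {0..1}"
    by (rule integrable_eq) (simp add: vd)
  show ?thesis
    unfolding ftc[symmetric]
    by (rule integral_norm_bound_integral[OF int int_norm]) (simp add: vd)
qed

lemma norm_diff_le_geodesic_dist: "ereal (norm (x - y)) \<le> geodesic_dist M x y"
  unfolding geodesic_dist_def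
proof (rule Inf_greatest, clarify)
  fix \<gamma> :: "real \<Rightarrow> real^'n"
  assume "\<gamma> C1_differentiable_on {0..1}"
  then have "norm (\<gamma> 0 - \<gamma> 1) \<le> integral {0..1} (\<lambda>t. norm (vector_derivative \<gamma> (at t)))"
    by (metis norm_minus_commute norm_diff_le_integral_norm_vector_derivative)
  then show "ereal (norm (\<gamma> 0 - \<gamma> 1)) \<le> ereal (integral {0..1} (\<lambda>t. norm (vector_derivative \<gamma> (at t))))"
    by simp
qed

lemma manifold_margin_lin_clf_eq_infinity:
  assumes "\<And>x. x \<in> D \<Longrightarrow> v \<bullet> x = 0"
  shows "manifold_margin M (lin_clf v) D = \<infinity>"
proof -
  have "{geodesic_dist M x1 x2 | x1 x2. x1 \<in> D \<and> x2 \<in> D \<and> lin_clf v x1 \<noteq> lin_clf v x2} = {}"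
    using assms by (auto simp: lin_clf_def)
  then show ?thesis
    unfolding manifold_margin_def by (simp only: Inf_empty) (simp add: top_ereal_def)
qed

lemma manifold_margin_lin_clf_ge:
  fixes v w :: "real^'n"
  assumes "D \<subseteq> M" and agree: "\<And>x. x \<in> M \<Longrightarrow> v \<bullet> x = w \<bullet> x" and "w \<noteq> 0"
    and m: "\<And>x. x \<in> D \<Longrightarrow> m \<le> \<bar>v \<bullet> x\<bar>"
  shows "ereal (m / norm w) \<le> manifold_margin M (lin_clf v) D"
proof -
  have "ereal (2 * m / norm w) \<le> geodesic_dist M x1 x2"
    if x: "x1 \<in> D" "x2 \<in> D" "lin_clf v x1 \<noteq> lin_clf v x2" for x1 x2
  proof -
    have "2 * m \<le> \<bar>v \<bullet> x1\<bar> + \<bar>v \<bullet> x2\<bar>"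
      using m[OF x(1)] m[OF x(2)] by linarith
    also have "\<dots> = \<bar>v \<bullet> x1 - v \<bullet> x2\<bar>"
      using x(3) by (auto simp: lin_clf_def split: if_splits)
    also have "\<dots> = \<bar>w \<bullet> (x1 - x2)\<bar>"
      using x(1,2) assms(1) by (simp add: agree subsetD inner_diff_right)
    also have "\<dots> \<le> norm w * norm (x1 - x2)"
      by (rule Cauchy_Schwarz_ineq2)
    finally have "2 * m / norm w \<le> norm (x1 - x2)"
      using \<open>w \<noteq> 0\<close> by (simp add: divide_le_eq mult.commute)
    then show ?thesis
      using norm_diff_le_geodesic_dist[of x1 x2 M] order_trans ereal_less_eq(3) by blast
  qed
  then have "ereal (2 * m / norm w)
      \<le> Inf {geodesic_dist M x1 x2 | x1 x2. x1 \<in> D \<and> x2 \<in> D \<and> lin_clf v x1 \<noteq> lin_clf v x2}"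
    by (intro Inf_greatest) blast
  then have "ereal (1/2) * ereal (2 * m / norm w) \<le> manifold_margin M (lin_clf v) D"
    unfolding manifold_margin_def by (rule ereal_mult_left_mono) simp
  then show ?thesis
    by simp
qed

lemma lin_clf_flip_step:
  fixes v x :: "real^'n"
  assumes "v \<noteq> 0" "0 < e"
  obtains \<delta> where "lin_clf v x \<noteq> lin_clf v (x + \<delta>)" "norm \<delta> = \<bar>v \<bullet> x\<bar> / norm v + e"
proof -
  \<comment> \<open>The slack \<open>e\<close> is needed because the hyperplane itself belongs to class 1.\<close>
  define \<sigma> :: real where "\<sigma> = (if 0 \<le> v \<bullet> x then 1 else -1)"
  define \<delta> where "\<delta> = (- \<sigma> * (\<bar>v \<bullet> x\<bar> / norm v + e) / norm v) *\<^sub>R v"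
  have "v \<bullet> (x + \<delta>) = v \<bullet> x - \<sigma> * (\<bar>v \<bullet> x\<bar> + e * norm v)"
    using assms(1) by (simp add: \<delta>_def inner_add_right dot_square_norm power2_eq_square field_simps)
  moreover have "0 < e * norm v"
    using assms by simp
  ultimately have "lin_clf v x \<noteq> lin_clf v (x + \<delta>)"
    by (auto simp: lin_clf_def \<sigma>_def)
  moreover have "norm \<delta> = \<bar>v \<bullet> x\<bar> / norm v + e"
    using assms by (simp add: \<delta>_def \<sigma>_def abs_mult)
  ultimately show ?thesis
    by (rule that)
qed

lemma eucl_margin_lin_clf_le:
  assumes "x \<in> D" "v \<noteq> 0"
  shows "eucl_margin (lin_clf v) D \<le> ereal (\<bar>v \<bullet> x\<bar> / norm v)"
proof (rule ereal_le_epsilon2)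
  fix e :: real
  assume "0 < e"
  with assms(2) obtain \<delta> where \<delta>: "lin_clf v x \<noteq> lin_clf v (x + \<delta>)" "norm \<delta> = \<bar>v \<bullet> x\<bar> / norm v + e"
    by (rule lin_clf_flip_step)
  have "eucl_margin (lin_clf v) D \<le> ereal (norm \<delta>)"
    unfolding eucl_margin_def using assms(1) \<delta>(1) by (intro INF_lower2[of x] INF_lower) auto
  then show "eucl_margin (lin_clf v) D \<le> ereal (\<bar>v \<bullet> x\<bar> / norm v) + ereal e"
    using \<delta>(2) by simp
qed

lemma margin_ratio_lin_clf_le:
  fixes v w :: "real^'n"
  assumes "D \<subseteq> M" "D \<noteq> {}" and agree: "\<And>x. x \<in> M \<Longrightarrow> v \<bullet> x = w \<bullet> x"
  shows "margin_ratio M (lin_clf v) D \<le> norm w / norm v"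
proof (cases "manifold_margin M (lin_clf v) D = \<infinity>")
  case True
  then show ?thesis
    by (simp add: margin_ratio_def)
next
  case finite: False
  have "v \<noteq> 0"
    using finite manifold_margin_lin_clf_eq_infinity[of D 0 M] by auto
  have "w \<noteq> 0"
  proof
    assume "w = 0"
    then have "v \<bullet> x = 0" if "x \<in> D" for x
      using that assms(1) agree by auto
    then show False
      using finite manifold_margin_lin_clf_eq_infinity by blast
  qed
  obtain x0 where "x0 \<in> D"
    using assms(2) by blast
  have "0 \<le> eucl_margin (lin_clf v) D"
    unfolding eucl_margin_def by (intro INF_greatest) simp
  then obtain t where t: "eucl_margin (lin_clf v) D = ereal t" "0 \<le> t"
    using eucl_margin_lin_clf_le[OF \<open>x0 \<in> D\<close> \<open>v \<noteq> 0\<close>] by (cases "eucl_margin (lin_clf v) D") auto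
  have "t * norm v \<le> \<bar>v \<bullet> x\<bar>" if "x \<in> D" for x
    using eucl_margin_lin_clf_le[OF that \<open>v \<noteq> 0\<close>] t(1) \<open>v \<noteq> 0\<close> by (simp add: le_divide_eq)
  with assms(1) agree \<open>w \<noteq> 0\<close>
  have "ereal (t * norm v / norm w) \<le> manifold_margin M (lin_clf v) D"
    by (rule manifold_margin_lin_clf_ge)
  with finite obtain y where y: "manifold_margin M (lin_clf v) D = ereal y" "t * norm v / norm w \<le> y"
    by (cases "manifold_margin M (lin_clf v) D") auto
  have "t / y \<le> norm w / norm v"
  proof (cases "t = 0")
    case False
    with t(2) y(2) \<open>v \<noteq> 0\<close> \<open>w \<noteq> 0\<close> have "0 < y" "t * norm v \<le> y * norm w"
      by (auto simp: divide_le_eq intro: less_le_trans[of 0 "t * norm v / norm w"])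
    then show ?thesis
      using \<open>v \<noteq> 0\<close> by (simp add: divide_le_eq le_divide_eq mult.commute)
  qed simp
  then show ?thesis
    using t(1) y(1) by (simp add: margin_ratio_def)
qed

lemma inner_eq_inner_orthonormal_sum:
  fixes B :: "'a::euclidean_space set"
  assumes "finite B" "pairwise orthogonal B" "\<And>b. b \<in> B \<Longrightarrow> norm b = 1" "x \<in> span B"
  shows "v \<bullet> x = (\<Sum>b\<in>B. (b \<bullet> v) *\<^sub>R b) \<bullet> x"
proof -
  have "(\<Sum>b\<in>B. (b \<bullet> v) *\<^sub>R b) \<bullet> c = v \<bullet> c" if "c \<in> B" for c
  proof -
    have "(\<Sum>b\<in>B. (b \<bullet> v) *\<^sub>R b) \<bullet> c = (\<Sum>b\<in>B. if b = c then v \<bullet> c else 0)"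
      unfolding inner_sum_left using assms(2,3) that
      by (intro sum.cong) (auto simp: pairwise_def orthogonal_def norm_eq_1 inner_commute)
    also have "\<dots> = v \<bullet> c"
      using assms(1) that by simp
    finally show ?thesis .
  qed
  then have "orthogonal (v - (\<Sum>b\<in>B. (b \<bullet> v) *\<^sub>R b)) x"
    by (intro orthogonal_to_span[OF assms(4)]) (simp add: orthogonal_def inner_diff_left)
  then show ?thesis
    by (simp add: orthogonal_def inner_diff_left)
qed

lemma norm_orthonormal_sum:
  fixes B :: "'a::euclidean_space set"
  assumes "finite B" "pairwise orthogonal B" "\<And>b. b \<in> B \<Longrightarrow> norm b = 1"
  shows "norm (\<Sum>b\<in>B. (b \<bullet> v) *\<^sub>R b) = sqrt (\<Sum>b\<in>B. (b \<bullet> v)\<^sup>2)"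
proof -
  have "pairwise (\<lambda>b c. orthogonal ((b \<bullet> v) *\<^sub>R b) ((c \<bullet> v) *\<^sub>R c)) B"
    using assms(2) by (intro pairwise_ortho_scaleR[where f=id and g=id, simplified])
  then have "(norm (\<Sum>b\<in>B. (b \<bullet> v) *\<^sub>R b))\<^sup>2 = (\<Sum>b\<in>B. (b \<bullet> v)\<^sup>2)"
    using assms by (simp add: norm_sum_Pythagorean power_mult_distrib)
  then show ?thesis
    by (metis norm_ge_zero real_sqrt_unique)
qed

lemma margin_ratio_lin_clf_le_orthonormal_basis:
  fixes B :: "(real^'n) set"
  assumes "D \<subseteq> M" "D \<noteq> {}" and B: "finite B" "pairwise orthogonal B" "\<And>b. b \<in> B \<Longrightarrow> norm b = 1"
    "span B = M"
  shows "margin_ratio M (lin_clf v) D \<le> sqrt (\<Sum>b\<in>B. (b \<bullet> v)\<^sup>2 / (v \<bullet> v))"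
proof -
  have "x \<in> M \<Longrightarrow> v \<bullet> x = (\<Sum>b\<in>B. (b \<bullet> v) *\<^sub>R b) \<bullet> x" for x
    using inner_eq_inner_orthonormal_sum[OF B(1-3)] B(4) by blast
  then have "margin_ratio M (lin_clf v) D \<le> norm (\<Sum>b\<in>B. (b \<bullet> v) *\<^sub>R b) / norm v"
    by (rule margin_ratio_lin_clf_le[OF assms(1,2)])
  also have "\<dots> = sqrt (\<Sum>b\<in>B. (b \<bullet> v)\<^sup>2) / sqrt (v \<bullet> v)"
    by (simp add: norm_orthonormal_sum[OF B(1-3)] norm_eq_sqrt_inner[of v])
  also have "\<dots> = sqrt (\<Sum>b\<in>B. (b \<bullet> v)\<^sup>2 / (v \<bullet> v))"
    by (simp only: sum_divide_distrib[symmetric] real_sqrt_divide)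
  finally show ?thesis .
qed

theorem proposition1:
  fixes M D :: "(real^'n) set" and r :: nat
  assumes "subspace M" and "dim M = r" and "1 \<le> r"
    and "D \<subseteq> M" and "D \<noteq> {}"
    and "AE nv in gauss_vec. manifold_margin M (lin_clf nv) D > 0"
  shows "(\<integral>\<^sup>+ nv. ennreal (margin_ratio M (lin_clf nv) D) \<partial>gauss_vec)
           \<le> ennreal (sqrt (real r / real CARD('n)))"
proof -
  obtain B where B: "pairwise orthogonal B" "\<And>b. b \<in> B \<Longrightarrow> norm b = 1"
      "independent B" "card B = r" "span B = M"
    using orthonormal_basis_subspace[OF assms(1)] assms(2) by metis
  have "finite B" "B \<noteq> {}"
    using B(3,4) assms(3) independent_imp_finite by auto
  then have "margin_ratio M (lin_clf v) D \<le> sqrt (\<Sum>b\<in>B. (b \<bullet> v)\<^sup>2 / (v \<bullet> v))" for v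
    using assms(4,5) B(1,2,5) by (intro margin_ratio_lin_clf_le_orthonormal_basis)
  then have "(\<integral>\<^sup>+ nv. ennreal (margin_ratio M (lin_clf nv) D) \<partial>gauss_vec)
      \<le> (\<integral>\<^sup>+ v. ennreal (sqrt (\<Sum>b\<in>B. (b \<bullet> v)\<^sup>2 / (v \<bullet> v))) \<partial>gauss_vec)"
    by (intro nn_integral_mono ennreal_leI)
  also have "\<dots> \<le> ennreal (sqrt (real r / real CARD('n)))"
    using nn_integral_gauss_vec_sqrt_sum_inner_sq_le[OF \<open>finite B\<close> \<open>B \<noteq> {}\<close> B(2)] B(4) by simp
  finally show ?thesis .
qed

end
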